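(* Let $\mathcal I$ be a finite set of followers, $\pi$ a fixed leader strategy, and for each $i\in\mathcal I$ let $\mathcal X_i=\{x^i\in\mathbb{R}^{m_F}\mid A_ix^i=b_i,\ G_ix^i\le h_i\}$ be nonempty, compact and satisfying Slater's condition. Let $J^i(x^i,x^{-i},\pi)=\tfrac12 (x^i)^TPx^i+(x^i)^TQ\sigma(x^{-i})+r_i^Tx^i+(x^i)^TS_i\pi$ with $\sigma(x^{-i})=\sum_{j\ne i}x^j$, $P=P^T\succ0$, $Q=Q^T\succeq0$, $P\succ Q$, $S_i$ diagonal with $S_i\succeq0$, and let $x^*=(x^{i*},x^{-i*})$ be the unique Nash equilibrium of the followers' game (obtained by the Picard–Banach iteration $x_{k+1}=\Pi_{\mathcal X}[x_k-\gamma F(x_k,\pi)]$). Fix $i$; let $\overline G_i,\overline h_i$ be the rows of $G_i,h_i$ corresponding to constraints active at $x^{i*}$ and $\underline G_i,\underline h_i$ the remaining rows (so $\overline G_ix^{i*}=\overline h_i$, $\underline G_ix^{i*}<\underline h_i$), and set $\overline A_i=\begin{bmatrix}A_i\\ \overline G_i\end{bmatrix}$, $\overline b_i=\begin{bmatrix}b_i\\ \overline h_i\end{bmatrix}$. Consider the auxiliary best-response problem $$\min_{x^i\in\mathbb{R}^{m_F}}J^i(x^i,x^{-i*},\pi)\ \text{ s.t. } \overline A_ix^i=\overline b_i,\ \underline G_ix^i\le\underline h_i,$$ with KKT map, for $z_i=(x^i,\lambda_i,\nu_i)$, $$l_i(z_i,\pi\mid x^{-i*})=\begin{bmatrix}\nabla_{x^i}J^i(x^i,x^{-i*},\pi)+\underline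 G_i^T\lambda_i+\overline A_i^T\nu_i\\ \mathrm{Dg}(\lambda_i)(\underline G_ix^i-\underline h_i)\\ \overline A_ix^i-\overline b_i\end{bmatrix},$$ and let $\hat z_i=(x^{i*},\hat\lambda_i,\hat\nu_i)$ be its KKT point (primal-dual optimal solution). Assume $\overline A_i$ has full row rank. Then the set $\overline\Gamma_i=\{j\mid (\hat\lambda_i)_j=0\text{ and }(\underline G_ix^{i*}-\underline h_i)_j=0\}$ is empty, and the Jacobian $\mathbf D_{z_i}l_i(\hat z_i,\pi\mid x^{-i*})$ is invertible and equals $$\begin{bmatrix}\nabla_{x^ix^i}J^i & \underline G_i^T & \overline A_i^T\\ \mathbf 0 & \mathrm{Dg}(\underline G_ix^{i*}-\underline h_i) & \mathbf 0\\ \overline A_i & \mathbf 0 & \mathbf 0\end{bmatrix}.$$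
   Context: $\mathrm{Dg}(v)$ denotes the diagonal matrix with the vector $v$ on its diagonal; $\mathbf D_{z}f$ denotes the Jacobian of $f$ with respect to $z$. $F(x,\pi)=\mathrm{col}((\nabla_{x^i}J^i)_i)$ is the pseudo-gradient of the followers' game and $\Pi_{\mathcal X}$ the Euclidean projection onto $\mathcal X=\prod_i\mathcal X_i$. *)

theory Defs
  imports "Jordan_Normal_Form.DL_Rank" "HOL-Analysis.Function_Topology"
begin

text \<open>Embedding of an n-vector into nat => real (product topology), used to speak of compactness.\<close>
definition vemb :: "nat \<Rightarrow> real vec \<Rightarrow> (nat \<Rightarrow> real)" where
  "vemb n v = (\<lambda>k. if k < n then v $ k else 0)"

definition polyhedron :: "nat \<Rightarrow> real mat \<Rightarrow> real vec \<Rightarrow> real mat \<Rightarrow> real vec \<Rightarrow> real vec set" where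
  "polyhedron n A b G h =
     {x \<in> carrier_vec n. A *\<^sub>v x = b \<and> (\<forall>k<dim_row G. (G *\<^sub>v x) $ k \<le> h $ k)}"

definition slater :: "nat \<Rightarrow> real mat \<Rightarrow> real vec \<Rightarrow> real mat \<Rightarrow> real vec \<Rightarrow> bool" where
  "slater n A b G h \<longleftrightarrow>
     (\<exists>x \<in> carrier_vec n. A *\<^sub>v x = b \<and> (\<forall>k<dim_row G. (G *\<^sub>v x) $ k < h $ k))"

definition sym_mat :: "real mat \<Rightarrow> bool" where
  "sym_mat P \<longleftrightarrow> transpose_mat P = P"

definition pos_def :: "nat \<Rightarrow> real mat \<Rightarrow> bool" where
  "pos_def n P \<longleftrightarrow> P \<in> carrier_mat n n \<and>
     (\<forall>x \<in> carrier_vec n. x \<noteq> 0\<^sub>v n \<longrightarrow> x \<bullet> (P *\<^sub>v x) > 0)"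

definition pos_semidef :: "nat \<Rightarrow> real mat \<Rightarrow> bool" where
  "pos_semidef n P \<longleftrightarrow> P \<in> carrier_mat n n \<and>
     (\<forall>x \<in> carrier_vec n. x \<bullet> (P *\<^sub>v x) \<ge> 0)"

definition sigma :: "nat \<Rightarrow> 'f set \<Rightarrow> 'f \<Rightarrow> ('f \<Rightarrow> real vec) \<Rightarrow> real vec" where
  "sigma n I i x = Matrix.vec n (\<lambda>k. \<Sum>j\<in>I - {i}. x j $ k)"

text \<open>J^i(y, x^{-i}, pi): own strategy y, the others' strategies read off the profile x.\<close>
definition Jcost :: "nat \<Rightarrow> real mat \<Rightarrow> real mat \<Rightarrow> ('f \<Rightarrow> real vec) \<Rightarrow> ('f \<Rightarrow> real mat)
    \<Rightarrow> 'f set \<Rightarrow> 'f \<Rightarrow> real vec \<Rightarrow> ('f \<Rightarrow> real vec) \<Rightarrow> real vec \<Rightarrow> real" where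
  "Jcost n P Q r S I i y x \<pi> =
     1/2 * (y \<bullet> (P *\<^sub>v y)) + y \<bullet> (Q *\<^sub>v sigma n I i x) + r i \<bullet> y + y \<bullet> (S i *\<^sub>v \<pi>)"

definition is_NE :: "'f set \<Rightarrow> ('f \<Rightarrow> real vec set) \<Rightarrow> ('f \<Rightarrow> real vec \<Rightarrow> ('f \<Rightarrow> real vec) \<Rightarrow> real)
    \<Rightarrow> ('f \<Rightarrow> real vec) \<Rightarrow> bool" where
  "is_NE I X J x \<longleftrightarrow> (\<forall>j\<in>I. x j \<in> X j \<and> (\<forall>y \<in> X j. J j (x j) x \<le> J j y x))"

definition partial :: "nat \<Rightarrow> (real vec \<Rightarrow> real) \<Rightarrow> real vec \<Rightarrow> nat \<Rightarrow> real" where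
  "partial n f x c = (THE D. ((\<lambda>t. f (x + t \<cdot>\<^sub>v unit_vec n c)) has_real_derivative D) (at 0))"

definition grad :: "nat \<Rightarrow> (real vec \<Rightarrow> real) \<Rightarrow> real vec \<Rightarrow> real vec" where
  "grad n f x = Matrix.vec n (\<lambda>c. partial n f x c)"

definition hess :: "nat \<Rightarrow> (real vec \<Rightarrow> real) \<Rightarrow> real vec \<Rightarrow> real mat" where
  "hess n f x = Matrix.mat n n (\<lambda>(r, c). partial n (\<lambda>y. grad n f y $ r) x c)"

definition jacobian_is :: "nat \<Rightarrow> (real vec \<Rightarrow> real vec) \<Rightarrow> real vec \<Rightarrow> real mat \<Rightarrow> bool" where
  "jacobian_is n F z D \<longleftrightarrow> D \<in> carrier_mat (dim_vec (F z)) n \<and>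
     (\<forall>r < dim_row D. \<forall>c < n.
        ((\<lambda>t. F (z + t \<cdot>\<^sub>v unit_vec n c) $ r) has_real_derivative (D $$ (r, c))) (at 0))"

definition rows_sel :: "real mat \<Rightarrow> nat list \<Rightarrow> real mat" where
  "rows_sel G ks = Matrix.mat (length ks) (dim_col G) (\<lambda>(r, c). G $$ (ks ! r, c))"

definition vec_sel :: "real vec \<Rightarrow> nat list \<Rightarrow> real vec" where
  "vec_sel h ks = Matrix.vec (length ks) (\<lambda>r. h $ (ks ! r))"

definition Dg :: "real vec \<Rightarrow> real mat" where
  "Dg v = mat_diag (dim_vec v) (\<lambda>j. v $ j)"

definition kkt_map :: "nat \<Rightarrow> (real vec \<Rightarrow> real) \<Rightarrow> real mat \<Rightarrow> real vec \<Rightarrow> real mat \<Rightarrow> real vec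
    \<Rightarrow> real vec \<Rightarrow> real vec" where
  "kkt_map n f Gu hu Ab bb z =
    (let nl = dim_row Gu; nv = dim_row Ab;
         x = Matrix.vec n (\<lambda>j. z $ j);
         lam = Matrix.vec nl (\<lambda>j. z $ (n + j));
         nu = Matrix.vec nv (\<lambda>j. z $ (n + nl + j))
     in (grad n f x + transpose_mat Gu *\<^sub>v lam + transpose_mat Ab *\<^sub>v nu)
        @\<^sub>v (Dg lam *\<^sub>v (Gu *\<^sub>v x - hu))
        @\<^sub>v (Ab *\<^sub>v x - bb))"

definition is_kkt_point :: "nat \<Rightarrow> (real vec \<Rightarrow> real) \<Rightarrow> real mat \<Rightarrow> real vec \<Rightarrow> real mat \<Rightarrow> real vec
    \<Rightarrow> real vec \<Rightarrow> real vec \<Rightarrow> real vec \<Rightarrow> bool" where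
  "is_kkt_point n f Gu hu Ab bb x lam nu \<longleftrightarrow>
     x \<in> carrier_vec n \<and> lam \<in> carrier_vec (dim_row Gu) \<and> nu \<in> carrier_vec (dim_row Ab) \<and>
     kkt_map n f Gu hu Ab bb (x @\<^sub>v lam @\<^sub>v nu) = 0\<^sub>v (n + dim_row Gu + dim_row Ab) \<and>
     (\<forall>j < dim_row Gu. lam $ j \<ge> 0 \<and> (Gu *\<^sub>v x) $ j \<le> hu $ j)"

definition block3 :: "real mat \<Rightarrow> real mat \<Rightarrow> real mat \<Rightarrow> real mat \<Rightarrow> real mat \<Rightarrow> real mat
    \<Rightarrow> real mat \<Rightarrow> real mat \<Rightarrow> real mat \<Rightarrow> real mat" where
  "block3 M11 M12 M13 M21 M22 M23 M31 M32 M33 =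
     four_block_mat (four_block_mat M11 M12 M21 M22) (M13 @\<^sub>r M23)
       (four_block_mat M31 M32 (0\<^sub>m 0 (dim_col M31)) (0\<^sub>m 0 (dim_col M32))) M33"

definition full_row_rank :: "real mat \<Rightarrow> bool" where
  "full_row_rank A \<longleftrightarrow> vec_space.rank (dim_row A) A = dim_row A"

definition act_idx :: "real mat \<Rightarrow> real vec \<Rightarrow> real vec \<Rightarrow> nat list" where
  "act_idx G h x = filter (\<lambda>k. (G *\<^sub>v x) $ k = h $ k) [0..<dim_row G]"

definition inact_idx :: "real mat \<Rightarrow> real vec \<Rightarrow> real vec \<Rightarrow> nat list" where
  "inact_idx G h x = filter (\<lambda>k. (G *\<^sub>v x) $ k \<noteq> h $ k) [0..<dim_row G]"

definition G_under :: "real mat \<Rightarrow> real vec \<Rightarrow> real vec \<Rightarrow> real mat" where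
  "G_under G h x = rows_sel G (inact_idx G h x)"

definition h_under :: "real mat \<Rightarrow> real vec \<Rightarrow> real vec \<Rightarrow> real vec" where
  "h_under G h x = vec_sel h (inact_idx G h x)"

definition A_bar :: "real mat \<Rightarrow> real mat \<Rightarrow> real vec \<Rightarrow> real vec \<Rightarrow> real mat" where
  "A_bar A G h x = A @\<^sub>r rows_sel G (act_idx G h x)"

definition b_bar :: "real vec \<Rightarrow> real mat \<Rightarrow> real vec \<Rightarrow> real vec \<Rightarrow> real vec" where
  "b_bar b G h x = b @\<^sub>v vec_sel h (act_idx G h x)"

end

theory Submission
  imports Defs
begin

(*
  The rows of G_under are, by construction, exactly the constraints with nonzero slack at x*,
  so no inactive constraint is weakly active, and complementary slackness forces the
  multipliers lambda to vanish.  The cost of follower i is quadratic in its own strategy with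
  Hessian P, so the KKT map is a polynomial of degree two along every line through the KKT
  point; its linear part there is the claimed block matrix.  If this matrix maps (u, p, q) to
  zero, then p = 0 because the slacks are nonzero, Ab u = 0 and P u = - Ab^T q; hence
  u^T P u = - (Ab u)^T q = 0, so u = 0 as P is positive definite, and Ab^T q = 0 forces q = 0
  because Ab has full row rank.
*)

section \<open>Quadratic functions\<close>

lemma has_real_derivative_quadratic_at_0:
  "((\<lambda>t::real. a + t * b + t\<^sup>2 * c) has_real_derivative b) (at 0)"
  by (auto intro!: derivative_eq_intros)

lemma partial_eqI:
  assumes "((\<lambda>t. f (x + t \<cdot>\<^sub>v unit_vec n c)) has_real_derivative D) (at 0)"
  shows "partial n f x c = D"
  unfolding partial_def using assms by (rule the_equality) (metis DERIV_unique assms)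

lemma scalar_prod_sym_mat_commute:
  fixes P :: "real mat"
  assumes P: "P \<in> carrier_mat n n" "sym_mat P" and x: "x \<in> carrier_vec n" and y: "y \<in> carrier_vec n"
  shows "x \<bullet> (P *\<^sub>v y) = y \<bullet> (P *\<^sub>v x)"
proof -
  have "x \<bullet> (P *\<^sub>v y) = (transpose_mat P *\<^sub>v x) \<bullet> y"
    using transpose_vec_mult_scalar[OF P(1) y x] ..
  also have "\<dots> = y \<bullet> (P *\<^sub>v x)"
    using P x y by (simp add: sym_mat_def comm_scalar_prod[of _ n])
  finally show ?thesis .
qed

lemma quadratic_along_line:
  fixes P :: "real mat"
  assumes P: "P \<in> carrier_mat n n" "sym_mat P"
    and x: "x \<in> carrier_vec n" and e: "e \<in> carrier_vec n" and k: "k \<in> carrier_vec n"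
  shows "1/2 * ((x + t \<cdot>\<^sub>v e) \<bullet> (P *\<^sub>v (x + t \<cdot>\<^sub>v e))) + (x + t \<cdot>\<^sub>v e) \<bullet> k
     = (1/2 * (x \<bullet> (P *\<^sub>v x)) + x \<bullet> k) + t * (e \<bullet> (P *\<^sub>v x + k)) + t\<^sup>2 * (1/2 * (e \<bullet> (P *\<^sub>v e)))"
proof -
  have "(x + t \<cdot>\<^sub>v e) \<bullet> (P *\<^sub>v (x + t \<cdot>\<^sub>v e))
     = x \<bullet> (P *\<^sub>v x) + t * (x \<bullet> (P *\<^sub>v e)) + t * (e \<bullet> (P *\<^sub>v x)) + t\<^sup>2 * (e \<bullet> (P *\<^sub>v e))"
    using P x e by (simp add: mult_mat_vec add_scalar_prod_distrib[of _ n]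
        scalar_prod_add_distrib[of _ n] algebra_simps power2_eq_square)
  moreover have "(x + t \<cdot>\<^sub>v e) \<bullet> k = x \<bullet> k + t * (e \<bullet> k)"
    using x e k by (simp add: add_scalar_prod_distrib[of _ n])
  moreover have "e \<bullet> (P *\<^sub>v x + k) = e \<bullet> (P *\<^sub>v x) + e \<bullet> k"
    using P x e k by (simp add: scalar_prod_add_distrib[of _ n])
  ultimately show ?thesis
    using scalar_prod_sym_mat_commute[OF P x e] by (simp add: algebra_simps)
qed

lemma grad_quadratic:
  fixes P :: "real mat"
  assumes f: "\<And>y. y \<in> carrier_vec n \<Longrightarrow> f y = 1/2 * (y \<bullet> (P *\<^sub>v y)) + y \<bullet> k"
    and P: "P \<in> carrier_mat n n" "sym_mat P" and k: "k \<in> carrier_vec n" and x: "x \<in> carrier_vec n"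
  shows "grad n f x = P *\<^sub>v x + k"
proof (rule eq_vecI)
  fix c assume "c < dim_vec (P *\<^sub>v x + k)"
  then have c: "c < n" using k by simp
  let ?e = "unit_vec n c"
  have "(\<lambda>t. f (x + t \<cdot>\<^sub>v ?e)) = (\<lambda>t. (1/2 * (x \<bullet> (P *\<^sub>v x)) + x \<bullet> k)
      + t * (P *\<^sub>v x + k) $ c + t\<^sup>2 * (1/2 * (?e \<bullet> (P *\<^sub>v ?e))))"
    using f x P k c quadratic_along_line[OF P x _ k] by (auto simp: fun_eq_iff)
  then have "partial n f x c = (P *\<^sub>v x + k) $ c"
    by (intro partial_eqI) (simp only: has_real_derivative_quadratic_at_0)
  then show "grad n f x $ c = (P *\<^sub>v x + k) $ c"
    using c by (simp add: grad_def)
qed (use k in \<open>simp add: grad_def\<close>)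

lemma hess_quadratic:
  fixes P :: "real mat"
  assumes f: "\<And>y. y \<in> carrier_vec n \<Longrightarrow> f y = 1/2 * (y \<bullet> (P *\<^sub>v y)) + y \<bullet> k"
    and P: "P \<in> carrier_mat n n" "sym_mat P" and k: "k \<in> carrier_vec n" and x: "x \<in> carrier_vec n"
  shows "hess n f x = P"
proof (rule eq_matI)
  fix r c assume "r < dim_row P" "c < dim_col P"
  then have rc: "r < n" "c < n" using P by auto
  let ?e = "unit_vec n c"
  have "grad n f (x + t \<cdot>\<^sub>v ?e) $ r = (P *\<^sub>v x + k) $ r + t * P $$ (r, c)" for t
    using grad_quadratic[OF f P k] x P k rc
    by (simp add: mult_add_distrib_mat_vec[of _ n n] mult_mat_vec[of _ n n])
  then have "partial n (\<lambda>y. grad n f y $ r) x c = P $$ (r, c)"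
    by (intro partial_eqI) (auto intro!: derivative_eq_intros)
  then show "hess n f x $$ (r, c) = P $$ (r, c)"
    using rc by (simp add: hess_def)
qed (use P in \<open>auto simp: hess_def\<close>)

lemma dim_Dg [simp]: "dim_row (Dg v) = dim_vec v" "dim_col (Dg v) = dim_vec v"
  by (simp_all add: Dg_def mat_diag_def)

lemma Dg_carrier_mat: "v \<in> carrier_vec m \<Longrightarrow> Dg v \<in> carrier_mat m m"
  by (simp add: carrier_matI)

lemma Dg_mult_vec:
  assumes "dim_vec w = dim_vec v"
  shows "Dg v *\<^sub>v w = Matrix.vec (dim_vec v) (\<lambda>j. v $ j * w $ j)"
proof (rule eq_vecI)
  fix j assume "j < dim_vec (Matrix.vec (dim_vec v) (\<lambda>j. v $ j * w $ j))"
  then have j: "j < dim_vec v" by simp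
  have "(Dg v *\<^sub>v w) $ j = (\<Sum>k<dim_vec v. (if j = k then v $ k else 0) * w $ k)"
    using j assms by (simp add: Dg_def mat_diag_def scalar_prod_def atLeast0LessThan)
  also have "\<dots> = (\<Sum>k<dim_vec v. if j = k then v $ k * w $ k else 0)"
    by (rule sum.cong) auto
  also have "\<dots> = v $ j * w $ j"
    using j by simp
  finally show "(Dg v *\<^sub>v w) $ j = Matrix.vec (dim_vec v) (\<lambda>j. v $ j * w $ j) $ j"
    using j by simp
qed (simp add: Dg_def mat_diag_def)

lemma Dg_zero_vec: "Dg (0\<^sub>v m) = 0\<^sub>m m m"
  by (rule eq_matI) (auto simp: Dg_def mat_diag_def)

lemma Dg_mult_vec_commute:
  assumes "dim_vec w = dim_vec v"
  shows "Dg v *\<^sub>v w = Dg w *\<^sub>v v"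
  using assms by (simp add: Dg_mult_vec mult.commute)

lemma Dg_nonzero_mult_vec_eq_0:
  assumes g: "g \<in> carrier_vec m" and nonzero: "\<And>j. j < m \<Longrightarrow> g $ j \<noteq> 0"
    and p: "p \<in> carrier_vec m" and gp: "Dg g *\<^sub>v p = 0\<^sub>v m"
  shows "p = 0\<^sub>v m"
proof (rule eq_vecI)
  fix j assume "j < dim_vec (0\<^sub>v m)"
  then have j: "j < m" by simp
  have "g $ j * p $ j = (Dg g *\<^sub>v p) $ j" using j g p by (simp add: Dg_mult_vec)
  then have "g $ j * p $ j = 0" using gp j by simp
  then show "p $ j = 0\<^sub>v m $ j" using nonzero[OF j] j by simp
qed (use p in simp)

lemma Dg_mult_vec_bilinear:
  assumes "a \<in> carrier_vec m" "b \<in> carrier_vec m" "c \<in> carrier_vec m" "d \<in> carrier_vec m"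
  shows "Dg (a + t \<cdot>\<^sub>v b) *\<^sub>v (c + t \<cdot>\<^sub>v d)
    = Dg a *\<^sub>v c + t \<cdot>\<^sub>v (Dg a *\<^sub>v d + Dg c *\<^sub>v b) + t\<^sup>2 \<cdot>\<^sub>v (Dg b *\<^sub>v d)"
  using assms by (intro eq_vecI) (simp_all add: Dg_mult_vec algebra_simps power2_eq_square)

lemma zero_mat_mult_vec: "v \<in> carrier_vec nc \<Longrightarrow> 0\<^sub>m nr nc *\<^sub>v v = 0\<^sub>v nr"
  by (intro eq_vecI) auto

lemma smult_append_vec: "a \<cdot>\<^sub>v (v @\<^sub>v w) = (a \<cdot>\<^sub>v v) @\<^sub>v (a \<cdot>\<^sub>v w)"
  by (rule eq_vecI) auto

lemma append_vec_assoc: "(u @\<^sub>v v) @\<^sub>v w = u @\<^sub>v v @\<^sub>v w"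
  by (rule eq_vecI) (auto simp: nth_append)

lemma zero_append3_vec: "0\<^sub>v (n1 + n2 + n3) = 0\<^sub>v n1 @\<^sub>v 0\<^sub>v n2 @\<^sub>v 0\<^sub>v n3"
  by (rule eq_vecI) auto

lemma carrier_append3_vecE:
  assumes "d \<in> carrier_vec (n1 + n2 + n3)"
  obtains a b c where "a \<in> carrier_vec n1" "b \<in> carrier_vec n2" "c \<in> carrier_vec n3"
    "d = a @\<^sub>v b @\<^sub>v c"
proof -
  have "d \<in> carrier_vec (n1 + (n2 + n3))" using assms by (simp add: add.assoc)
  then have "d = vec_first d n1 @\<^sub>v vec_first (vec_last d (n2 + n3)) n2
      @\<^sub>v vec_last (vec_last d (n2 + n3)) n3"
    by (metis vec_first_last_append vec_last_carrier)
  then show thesis by (rule that[rotated -1]) auto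
qed

lemma append3_vec_add:
  assumes "a1 \<in> carrier_vec n1" "b1 \<in> carrier_vec n1" "a2 \<in> carrier_vec n2" "b2 \<in> carrier_vec n2"
    and "a3 \<in> carrier_vec n3" "b3 \<in> carrier_vec n3"
  shows "(a1 @\<^sub>v a2 @\<^sub>v a3) + (b1 @\<^sub>v b2 @\<^sub>v b3) = (a1 + b1) @\<^sub>v (a2 + b2) @\<^sub>v (a3 + b3)"
  using assms by (simp add: append_vec_add[of _ n1 _ _ "n2 + n3"] append_vec_add[of _ n2 _ _ n3])

lemma append3_vec_add_smult:
  assumes "a1 \<in> carrier_vec n1" "b1 \<in> carrier_vec n1" "c1 \<in> carrier_vec n1"
    and "a2 \<in> carrier_vec n2" "b2 \<in> carrier_vec n2" "c2 \<in> carrier_vec n2"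
    and "a3 \<in> carrier_vec n3" "b3 \<in> carrier_vec n3" "c3 \<in> carrier_vec n3"
  shows "(a1 @\<^sub>v a2 @\<^sub>v a3) + s \<cdot>\<^sub>v (b1 @\<^sub>v b2 @\<^sub>v b3) + t \<cdot>\<^sub>v (c1 @\<^sub>v c2 @\<^sub>v c3)
    = (a1 + s \<cdot>\<^sub>v b1 + t \<cdot>\<^sub>v c1) @\<^sub>v (a2 + s \<cdot>\<^sub>v b2 + t \<cdot>\<^sub>v c2) @\<^sub>v (a3 + s \<cdot>\<^sub>v b3 + t \<cdot>\<^sub>v c3)"
  using assms by (simp add: smult_append_vec append3_vec_add[of _ n1 _ _ n2 _ _ n3])

lemma append3_vec_eq_iff:
  assumes "a1 \<in> carrier_vec n1" "b1 \<in> carrier_vec n1" "a2 \<in> carrier_vec n2" "b2 \<in> carrier_vec n2"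
  shows "a1 @\<^sub>v a2 @\<^sub>v a3 = b1 @\<^sub>v b2 @\<^sub>v b3 \<longleftrightarrow> a1 = b1 \<and> a2 = b2 \<and> a3 = b3"
  using assms by (simp add: append_vec_eq[of _ n1])

lemma block3_carrier_mat:
  assumes "M11 \<in> carrier_mat n1 m1" "M22 \<in> carrier_mat n2 m2" "M33 \<in> carrier_mat n3 m3"
  shows "block3 M11 M12 M13 M21 M22 M23 M31 M32 M33 \<in> carrier_mat (n1 + n2 + n3) (m1 + m2 + m3)"
  unfolding block3_def using assms by (intro four_block_carrier_mat) auto

lemma block3_mult_vec:
  assumes "M11 \<in> carrier_mat n1 m1" "M12 \<in> carrier_mat n1 m2" "M13 \<in> carrier_mat n1 m3"
    and "M21 \<in> carrier_mat n2 m1" "M22 \<in> carrier_mat n2 m2" "M23 \<in> carrier_mat n2 m3"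
    and "M31 \<in> carrier_mat n3 m1" "M32 \<in> carrier_mat n3 m2" "M33 \<in> carrier_mat n3 m3"
    and u: "u \<in> carrier_vec m1" and p: "p \<in> carrier_vec m2" and q: "q \<in> carrier_vec m3"
  shows "block3 M11 M12 M13 M21 M22 M23 M31 M32 M33 *\<^sub>v (u @\<^sub>v p @\<^sub>v q)
    = (M11 *\<^sub>v u + M12 *\<^sub>v p + M13 *\<^sub>v q) @\<^sub>v (M21 *\<^sub>v u + M22 *\<^sub>v p + M23 *\<^sub>v q)
      @\<^sub>v (M31 *\<^sub>v u + M32 *\<^sub>v p + M33 *\<^sub>v q)"
proof -
  have dims: "dim_col M31 = m1" "dim_col M32 = m2" using assms by auto
  have upper: "four_block_mat M11 M12 M21 M22 \<in> carrier_mat (n1 + n2) (m1 + m2)"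
    using four_block_carrier_mat[OF assms(1) assms(5)] .
  have right: "M13 @\<^sub>r M23 \<in> carrier_mat (n1 + n2) m3"
    using carrier_append_rows[OF assms(3) assms(6)] .
  have lower: "four_block_mat M31 M32 (0\<^sub>m 0 m1) (0\<^sub>m 0 m2) \<in> carrier_mat n3 (m1 + m2)"
    using four_block_carrier_mat[OF assms(7) zero_carrier_mat[of 0 m2]] by simp
  have "block3 M11 M12 M13 M21 M22 M23 M31 M32 M33 *\<^sub>v ((u @\<^sub>v p) @\<^sub>v q)
    = (four_block_mat M11 M12 M21 M22 *\<^sub>v (u @\<^sub>v p) + (M13 @\<^sub>r M23) *\<^sub>v q)
      @\<^sub>v (four_block_mat M31 M32 (0\<^sub>m 0 m1) (0\<^sub>m 0 m2) *\<^sub>v (u @\<^sub>v p) + M33 *\<^sub>v q)"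
    unfolding block3_def dims
    by (rule four_block_mat_mult_vec[OF upper right lower assms(9) append_carrier_vec[OF u p] q])
  also have "four_block_mat M11 M12 M21 M22 *\<^sub>v (u @\<^sub>v p)
      = (M11 *\<^sub>v u + M12 *\<^sub>v p) @\<^sub>v (M21 *\<^sub>v u + M22 *\<^sub>v p)"
    by (rule four_block_mat_mult_vec[OF assms(1,2,4,5) u p])
  also have "four_block_mat M31 M32 (0\<^sub>m 0 m1) (0\<^sub>m 0 m2) *\<^sub>v (u @\<^sub>v p)
      = (M31 *\<^sub>v u + M32 *\<^sub>v p) @\<^sub>v (0\<^sub>m 0 m1 *\<^sub>v u + 0\<^sub>m 0 m2 *\<^sub>v p)"
    by (rule four_block_mat_mult_vec[OF assms(7,8) zero_carrier_mat zero_carrier_mat u p])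
  also have "(M13 @\<^sub>r M23) *\<^sub>v q = (M13 *\<^sub>v q) @\<^sub>v (M23 *\<^sub>v q)"
    by (rule mat_mult_append[OF assms(3,6) q])
  also have "((M11 *\<^sub>v u + M12 *\<^sub>v p) @\<^sub>v (M21 *\<^sub>v u + M22 *\<^sub>v p)) + ((M13 *\<^sub>v q) @\<^sub>v (M23 *\<^sub>v q))
      = (M11 *\<^sub>v u + M12 *\<^sub>v p + M13 *\<^sub>v q) @\<^sub>v (M21 *\<^sub>v u + M22 *\<^sub>v p + M23 *\<^sub>v q)"
    using assms by (intro append_vec_add[of _ n1 _ _ n2]) auto
  also have "((M31 *\<^sub>v u + M32 *\<^sub>v p) @\<^sub>v (0\<^sub>m 0 m1 *\<^sub>v u + 0\<^sub>m 0 m2 *\<^sub>v p)) + M33 *\<^sub>v q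
      = M31 *\<^sub>v u + M32 *\<^sub>v p + M33 *\<^sub>v q"
    using assms by (intro eq_vecI) auto
  finally show ?thesis by (simp add: append_vec_assoc)
qed

section \<open>The Jacobian of the KKT map\<close>

lemma jacobian_isI_quadratic_along_lines:
  assumes D: "D \<in> carrier_mat (dim_vec (F z)) N"
    and line: "\<And>d. d \<in> carrier_vec N \<Longrightarrow> \<exists>q \<in> carrier_vec (dim_vec (F z)).
       \<forall>t. F (z + t \<cdot>\<^sub>v d) = F z + t \<cdot>\<^sub>v (D *\<^sub>v d) + t\<^sup>2 \<cdot>\<^sub>v q"
  shows "jacobian_is N F z D"
  unfolding jacobian_is_def
proof (intro conjI allI impI D)
  fix r c assume r: "r < dim_row D" and c: "c < N"
  obtain q where q: "q \<in> carrier_vec (dim_vec (F z))"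
    and Fq: "\<And>t. F (z + t \<cdot>\<^sub>v unit_vec N c) = F z + t \<cdot>\<^sub>v (D *\<^sub>v unit_vec N c) + t\<^sup>2 \<cdot>\<^sub>v q"
    using line[OF unit_vec_carrier] by blast
  have "F (z + t \<cdot>\<^sub>v unit_vec N c) $ r = F z $ r + t * D $$ (r, c) + t\<^sup>2 * q $ r" for t
    using Fq r c D q by simp
  then show "((\<lambda>t. F (z + t \<cdot>\<^sub>v unit_vec N c) $ r) has_real_derivative D $$ (r, c)) (at 0)"
    by (simp only: has_real_derivative_quadratic_at_0)
qed

lemma kkt_map_append:
  assumes "x \<in> carrier_vec n" "lam \<in> carrier_vec (dim_row Gu)" "nu \<in> carrier_vec (dim_row Ab)"
  shows "kkt_map n f Gu hu Ab bb (x @\<^sub>v lam @\<^sub>v nu)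
    = (grad n f x + transpose_mat Gu *\<^sub>v lam + transpose_mat Ab *\<^sub>v nu)
      @\<^sub>v (Dg lam *\<^sub>v (Gu *\<^sub>v x - hu)) @\<^sub>v (Ab *\<^sub>v x - bb)"
proof -
  have "Matrix.vec n (\<lambda>j. (x @\<^sub>v lam @\<^sub>v nu) $ j) = x"
    and "Matrix.vec (dim_row Gu) (\<lambda>j. (x @\<^sub>v lam @\<^sub>v nu) $ (n + j)) = lam"
    and "Matrix.vec (dim_row Ab) (\<lambda>j. (x @\<^sub>v lam @\<^sub>v nu) $ (n + dim_row Gu + j)) = nu"
    using assms by auto
  then show ?thesis by (simp add: kkt_map_def Let_def)
qed

lemma kkt_map_along_line_blockwise:
  fixes P Gu Ab :: "real mat"
  assumes grad: "\<And>y. y \<in> carrier_vec n \<Longrightarrow> grad n f y = P *\<^sub>v y + k"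
    and P: "P \<in> carrier_mat n n" and k: "k \<in> carrier_vec n"
    and Gu: "Gu \<in> carrier_mat nl n" and hu: "hu \<in> carrier_vec nl"
    and Ab: "Ab \<in> carrier_mat nv n" and bb: "bb \<in> carrier_vec nv"
    and x: "x \<in> carrier_vec n" and lam: "lam \<in> carrier_vec nl" and nu: "nu \<in> carrier_vec nv"
    and dx: "dx \<in> carrier_vec n" and dl: "dl \<in> carrier_vec nl" and dn: "dn \<in> carrier_vec nv"
  shows "kkt_map n f Gu hu Ab bb ((x @\<^sub>v lam @\<^sub>v nu) + t \<cdot>\<^sub>v (dx @\<^sub>v dl @\<^sub>v dn))
    = (grad n f x + transpose_mat Gu *\<^sub>v lam + transpose_mat Ab *\<^sub>v nu
        + t \<cdot>\<^sub>v (P *\<^sub>v dx + transpose_mat Gu *\<^sub>v dl + transpose_mat Ab *\<^sub>v dn) + t\<^sup>2 \<cdot>\<^sub>v 0\<^sub>v n)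
      @\<^sub>v (Dg lam *\<^sub>v (Gu *\<^sub>v x - hu)
        + t \<cdot>\<^sub>v ((Dg lam * Gu) *\<^sub>v dx + Dg (Gu *\<^sub>v x - hu) *\<^sub>v dl) + t\<^sup>2 \<cdot>\<^sub>v (Dg dl *\<^sub>v (Gu *\<^sub>v dx)))
      @\<^sub>v (Ab *\<^sub>v x - bb + t \<cdot>\<^sub>v (Ab *\<^sub>v dx) + t\<^sup>2 \<cdot>\<^sub>v 0\<^sub>v nv)"
proof -
  have GuT: "transpose_mat Gu \<in> carrier_mat n nl" and AbT: "transpose_mat Ab \<in> carrier_mat n nv"
    using Gu Ab by auto
  have "(x @\<^sub>v lam @\<^sub>v nu) + t \<cdot>\<^sub>v (dx @\<^sub>v dl @\<^sub>v dn)
      = (x + t \<cdot>\<^sub>v dx) @\<^sub>v (lam + t \<cdot>\<^sub>v dl) @\<^sub>v (nu + t \<cdot>\<^sub>v dn)"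
    using x lam nu dx dl dn by (simp add: smult_append_vec append3_vec_add)
  moreover have "lam + t \<cdot>\<^sub>v dl \<in> carrier_vec (dim_row Gu)" "nu + t \<cdot>\<^sub>v dn \<in> carrier_vec (dim_row Ab)"
    using Gu Ab lam dl nu dn by auto
  ultimately have shifted: "kkt_map n f Gu hu Ab bb ((x @\<^sub>v lam @\<^sub>v nu) + t \<cdot>\<^sub>v (dx @\<^sub>v dl @\<^sub>v dn))
      = (grad n f (x + t \<cdot>\<^sub>v dx) + transpose_mat Gu *\<^sub>v (lam + t \<cdot>\<^sub>v dl)
          + transpose_mat Ab *\<^sub>v (nu + t \<cdot>\<^sub>v dn))
        @\<^sub>v (Dg (lam + t \<cdot>\<^sub>v dl) *\<^sub>v (Gu *\<^sub>v (x + t \<cdot>\<^sub>v dx) - hu))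
        @\<^sub>v (Ab *\<^sub>v (x + t \<cdot>\<^sub>v dx) - bb)"
    using kkt_map_append x dx by simp
  have "grad n f (x + t \<cdot>\<^sub>v dx) + transpose_mat Gu *\<^sub>v (lam + t \<cdot>\<^sub>v dl)
        + transpose_mat Ab *\<^sub>v (nu + t \<cdot>\<^sub>v dn)
      = grad n f x + transpose_mat Gu *\<^sub>v lam + transpose_mat Ab *\<^sub>v nu
        + t \<cdot>\<^sub>v (P *\<^sub>v dx + transpose_mat Gu *\<^sub>v dl + transpose_mat Ab *\<^sub>v dn) + t\<^sup>2 \<cdot>\<^sub>v 0\<^sub>v n"
    using x lam nu dx dl dn P k GuT AbT
    by (intro eq_vecI) (simp_all add: grad mult_add_distrib_mat_vec[of _ n] mult_mat_vec[of _ n] algebra_simps)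
  moreover have "Dg (lam + t \<cdot>\<^sub>v dl) *\<^sub>v (Gu *\<^sub>v (x + t \<cdot>\<^sub>v dx) - hu)
      = Dg lam *\<^sub>v (Gu *\<^sub>v x - hu)
        + t \<cdot>\<^sub>v ((Dg lam * Gu) *\<^sub>v dx + Dg (Gu *\<^sub>v x - hu) *\<^sub>v dl) + t\<^sup>2 \<cdot>\<^sub>v (Dg dl *\<^sub>v (Gu *\<^sub>v dx))"
  proof -
    have "Gu *\<^sub>v (x + t \<cdot>\<^sub>v dx) - hu = (Gu *\<^sub>v x - hu) + t \<cdot>\<^sub>v (Gu *\<^sub>v dx)"
      using Gu x dx hu by (intro eq_vecI) (simp_all add: mult_add_distrib_mat_vec[of _ nl] mult_mat_vec[of _ nl])
    moreover have "Gu *\<^sub>v x - hu \<in> carrier_vec nl" "Gu *\<^sub>v dx \<in> carrier_vec nl" using Gu x dx hu by auto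
    ultimately show ?thesis
      using Dg_mult_vec_bilinear[OF lam dl] assoc_mult_mat_vec[OF Dg_carrier_mat[OF lam] Gu dx] by simp
  qed
  moreover have "Ab *\<^sub>v (x + t \<cdot>\<^sub>v dx) - bb = Ab *\<^sub>v x - bb + t \<cdot>\<^sub>v (Ab *\<^sub>v dx) + t\<^sup>2 \<cdot>\<^sub>v 0\<^sub>v nv"
    using x dx Ab bb
    by (intro eq_vecI) (simp_all add: mult_add_distrib_mat_vec[of _ nv] mult_mat_vec[of _ nv])
  ultimately show ?thesis unfolding shifted by simp
qed

lemma kkt_map_along_line:
  fixes P Gu Ab :: "real mat"
  assumes grad: "\<And>y. y \<in> carrier_vec n \<Longrightarrow> grad n f y = P *\<^sub>v y + k"
    and P: "P \<in> carrier_mat n n" and k: "k \<in> carrier_vec n"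
    and Gu: "Gu \<in> carrier_mat nl n" and hu: "hu \<in> carrier_vec nl"
    and Ab: "Ab \<in> carrier_mat nv n" and bb: "bb \<in> carrier_vec nv"
    and x: "x \<in> carrier_vec n" and lam: "lam \<in> carrier_vec nl" and nu: "nu \<in> carrier_vec nv"
    and dx: "dx \<in> carrier_vec n" and dl: "dl \<in> carrier_vec nl" and dn: "dn \<in> carrier_vec nv"
  shows "kkt_map n f Gu hu Ab bb ((x @\<^sub>v lam @\<^sub>v nu) + t \<cdot>\<^sub>v (dx @\<^sub>v dl @\<^sub>v dn))
    = kkt_map n f Gu hu Ab bb (x @\<^sub>v lam @\<^sub>v nu)
      + t \<cdot>\<^sub>v (block3 P (transpose_mat Gu) (transpose_mat Ab)
                 (Dg lam * Gu) (Dg (Gu *\<^sub>v x - hu)) (0\<^sub>m nl nv)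
                 Ab (0\<^sub>m nv nl) (0\<^sub>m nv nv) *\<^sub>v (dx @\<^sub>v dl @\<^sub>v dn))
      + t\<^sup>2 \<cdot>\<^sub>v (0\<^sub>v n @\<^sub>v (Dg dl *\<^sub>v (Gu *\<^sub>v dx)) @\<^sub>v 0\<^sub>v nv)"
proof -
  have GuT: "transpose_mat Gu \<in> carrier_mat n nl" and AbT: "transpose_mat Ab \<in> carrier_mat n nv"
    and slack: "Gu *\<^sub>v x - hu \<in> carrier_vec nl" and Dg_slack: "Dg (Gu *\<^sub>v x - hu) \<in> carrier_mat nl nl"
    and Dg_lam: "Dg lam * Gu \<in> carrier_mat nl n"
    using Gu Ab x hu lam by auto
  have dim: "dim_vec x = n" "dim_vec dx = n" "dim_vec k = n" "dim_vec lam = nl" "dim_vec dl = nl"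
    "dim_vec hu = nl" "dim_vec nu = nv" "dim_vec dn = nv" "dim_vec bb = nv"
    "dim_row P = n" "dim_col P = n" "dim_row Gu = nl" "dim_col Gu = n" "dim_row Ab = nv" "dim_col Ab = n"
    using assms by auto
  then have "lam \<in> carrier_vec (dim_row Gu)" "nu \<in> carrier_vec (dim_row Ab)" using lam nu by auto
  note kkt_map_z = kkt_map_append[OF x this]
  have "kkt_map n f Gu hu Ab bb ((x @\<^sub>v lam @\<^sub>v nu) + t \<cdot>\<^sub>v (dx @\<^sub>v dl @\<^sub>v dn))
    = kkt_map n f Gu hu Ab bb (x @\<^sub>v lam @\<^sub>v nu)
      + t \<cdot>\<^sub>v ((P *\<^sub>v dx + transpose_mat Gu *\<^sub>v dl + transpose_mat Ab *\<^sub>v dn)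
          @\<^sub>v ((Dg lam * Gu) *\<^sub>v dx + Dg (Gu *\<^sub>v x - hu) *\<^sub>v dl) @\<^sub>v (Ab *\<^sub>v dx))
      + t\<^sup>2 \<cdot>\<^sub>v (0\<^sub>v n @\<^sub>v (Dg dl *\<^sub>v (Gu *\<^sub>v dx)) @\<^sub>v 0\<^sub>v nv)"
    unfolding kkt_map_z
    by (rule trans[OF kkt_map_along_line_blockwise[OF grad P k Gu hu Ab bb x lam nu dx dl dn]],
        assumption, rule append3_vec_add_smult[of _ n _ _ _ nl _ _ _ nv, symmetric];
        intro carrier_vecI; simp add: dim grad[OF x])
  also have "(P *\<^sub>v dx + transpose_mat Gu *\<^sub>v dl + transpose_mat Ab *\<^sub>v dn)
          @\<^sub>v ((Dg lam * Gu) *\<^sub>v dx + Dg (Gu *\<^sub>v x - hu) *\<^sub>v dl) @\<^sub>v (Ab *\<^sub>v dx)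
      = block3 P (transpose_mat Gu) (transpose_mat Ab)
                 (Dg lam * Gu) (Dg (Gu *\<^sub>v x - hu)) (0\<^sub>m nl nv)
                 Ab (0\<^sub>m nv nl) (0\<^sub>m nv nv) *\<^sub>v (dx @\<^sub>v dl @\<^sub>v dn)"
    using block3_mult_vec[OF P GuT AbT Dg_lam Dg_slack zero_carrier_mat Ab zero_carrier_mat
        zero_carrier_mat dx dl dn] Dg_lam Dg_slack Ab dx dl dn
    by (simp add: zero_mat_mult_vec)
  finally show ?thesis .
qed

lemma jacobian_kkt_map:
  fixes P Gu Ab :: "real mat"
  assumes grad: "\<And>y. y \<in> carrier_vec n \<Longrightarrow> grad n f y = P *\<^sub>v y + k"
    and P: "P \<in> carrier_mat n n" and k: "k \<in> carrier_vec n"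
    and Gu: "Gu \<in> carrier_mat nl n" and hu: "hu \<in> carrier_vec nl"
    and Ab: "Ab \<in> carrier_mat nv n" and bb: "bb \<in> carrier_vec nv"
    and x: "x \<in> carrier_vec n" and lam: "lam \<in> carrier_vec nl" and nu: "nu \<in> carrier_vec nv"
  shows "jacobian_is (n + nl + nv) (kkt_map n f Gu hu Ab bb) (x @\<^sub>v lam @\<^sub>v nu)
    (block3 P (transpose_mat Gu) (transpose_mat Ab)
       (Dg lam * Gu) (Dg (Gu *\<^sub>v x - hu)) (0\<^sub>m nl nv)
       Ab (0\<^sub>m nv nl) (0\<^sub>m nv nv))"
proof (rule jacobian_isI_quadratic_along_lines)
  have slack: "Gu *\<^sub>v x - hu \<in> carrier_vec nl" using Gu x hu by simp
  have dim_kkt: "dim_vec (kkt_map n f Gu hu Ab bb (x @\<^sub>v lam @\<^sub>v nu)) = n + nl + nv"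
  proof -
    have "lam \<in> carrier_vec (dim_row Gu)" "nu \<in> carrier_vec (dim_row Ab)" using Gu Ab lam nu by auto
    from kkt_map_append[OF x this] show ?thesis
      using carrier_matD[OF Gu] carrier_matD[OF Ab] carrier_vecD[OF bb] carrier_vecD[OF lam] by simp
  qed
  show "block3 P (transpose_mat Gu) (transpose_mat Ab) (Dg lam * Gu) (Dg (Gu *\<^sub>v x - hu))
      (0\<^sub>m nl nv) Ab (0\<^sub>m nv nl) (0\<^sub>m nv nv)
    \<in> carrier_mat (dim_vec (kkt_map n f Gu hu Ab bb (x @\<^sub>v lam @\<^sub>v nu))) (n + nl + nv)"
    unfolding dim_kkt by (rule block3_carrier_mat[OF P Dg_carrier_mat[OF slack] zero_carrier_mat])
  fix d :: "real vec" assume "d \<in> carrier_vec (n + nl + nv)"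
  then obtain dx dl dn where dx: "dx \<in> carrier_vec n" and dl: "dl \<in> carrier_vec nl"
    and dn: "dn \<in> carrier_vec nv" and d: "d = dx @\<^sub>v dl @\<^sub>v dn"
    by (rule carrier_append3_vecE)
  have "Dg dl *\<^sub>v (Gu *\<^sub>v dx) \<in> carrier_vec nl"
    using mult_mat_vec_carrier[OF Dg_carrier_mat[OF dl] mult_mat_vec_carrier[OF Gu dx]] .
  then have "0\<^sub>v n @\<^sub>v (Dg dl *\<^sub>v (Gu *\<^sub>v dx)) @\<^sub>v 0\<^sub>v nv \<in> carrier_vec (n + nl + nv)"
    using append_carrier_vec[OF zero_carrier_vec append_carrier_vec[OF _ zero_carrier_vec]]
    by (simp add: add.assoc)
  then show "\<exists>q \<in> carrier_vec (dim_vec (kkt_map n f Gu hu Ab bb (x @\<^sub>v lam @\<^sub>v nu))).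
      \<forall>t. kkt_map n f Gu hu Ab bb ((x @\<^sub>v lam @\<^sub>v nu) + t \<cdot>\<^sub>v d)
        = kkt_map n f Gu hu Ab bb (x @\<^sub>v lam @\<^sub>v nu)
          + t \<cdot>\<^sub>v (block3 P (transpose_mat Gu) (transpose_mat Ab) (Dg lam * Gu) (Dg (Gu *\<^sub>v x - hu))
               (0\<^sub>m nl nv) Ab (0\<^sub>m nv nl) (0\<^sub>m nv nv) *\<^sub>v d) + t\<^sup>2 \<cdot>\<^sub>v q"
    unfolding dim_kkt d using kkt_map_along_line[OF grad P k Gu hu Ab bb x lam nu dx dl dn] by blast
qed

section \<open>Invertibility of the KKT matrix\<close>

lemma (in vec_space) span_cols_full_rank:
  assumes A: "A \<in> carrier_mat n k" and rank: "rank A = n"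
  shows "span (set (cols A)) = carrier_vec n"
proof -
  let ?S = "set (cols A)"
  have S: "?S \<subseteq> carrier_vec n" using A cols_dim by blast
  have vs: "vectorspace class_ring (vs (span ?S))"
    using span_is_subspace[OF S] subspace_is_vs by simp
  obtain B where B: "finite B" "vectorspace.basis class_ring (vs (span ?S)) B"
    using vectorspace.finite_basis_exists[OF vs fin_dim_span_cols[OF A]] by blast
  have card: "card B = n"
    using vectorspace.dim_basis[OF vs B] rank unfolding rank_def by simp
  have BS: "B \<subseteq> span ?S" and "LinearCombinations.module.lin_indpt class_ring (vs (span ?S)) B"
    using B(2) unfolding vectorspace.basis_def[OF vs] by simp_all
  then have "lin_indpt B"
    using span_li_not_depend(2)[OF BS span_is_submodule[OF S]] by simp
  moreover have "B \<subseteq> carrier_vec n" using BS S span_closed by auto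
  ultimately have "basis B"
    using B(1) card by (intro dim_li_is_basis) (auto simp: dim_is_n)
  then have "carrier_vec n \<subseteq> span ?S"
    using span_is_subset[OF BS span_is_submodule[OF S]] unfolding basis_def by simp
  then show ?thesis using S span_closed by auto
qed

lemma full_row_rank_transpose_kernel:
  fixes A :: "real mat"
  assumes A: "A \<in> carrier_mat m k" and rank: "full_row_rank A"
    and w: "w \<in> carrier_vec m" and Aw: "transpose_mat A *\<^sub>v w = 0\<^sub>v k"
  shows "w = 0\<^sub>v m"
proof -
  interpret vec_space "TYPE(real)" m .
  have S: "set (cols A) \<subseteq> carrier_vec m" using A cols_dim by blast
  have "w \<in> orthogonal_complement (set (cols A))"
    unfolding orthogonal_complement_def
  proof (intro CollectI conjI ballI w)
    fix y assume "y \<in> set (cols A)"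
    then obtain j where j: "j < k" "y = col A j" using A by (auto simp: cols_def)
    have "(transpose_mat A *\<^sub>v w) $ j = 0" using Aw j by simp
    then show "w \<bullet> y = 0" using j A w by (simp add: comm_scalar_prod[of w m])
  qed
  moreover have "span (set (cols A)) = carrier_vec m"
    using A rank by (intro span_cols_full_rank) (auto simp: full_row_rank_def)
  ultimately have "w \<in> orthogonal_complement (carrier_vec m)"
    using in_orthogonal_complement_span[OF S] by simp
  then have "w \<bullet> w = 0" using w unfolding orthogonal_complement_def by auto
  then show ?thesis using conjugate_square_eq_0_vec[OF w] by simp
qed

lemma invertible_mat_if_trivial_kernel:
  fixes M :: "'a :: field mat"
  assumes M: "M \<in> carrier_mat N N"
    and ker: "\<And>v. v \<in> carrier_vec N \<Longrightarrow> M *\<^sub>v v = 0\<^sub>v N \<Longrightarrow> v = 0\<^sub>v N"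
  shows "invertible_mat M"
proof -
  have "det M \<noteq> 0" using det_0_iff_vec_prod_zero_field[OF M] ker by blast
  from det_non_zero_imp_unit[OF M this, of "()"]
  obtain B where "B \<in> carrier_mat N N" "B * M = 1\<^sub>m N" "M * B = 1\<^sub>m N"
    unfolding Units_def ring_mat_def by auto
  then show ?thesis using M unfolding invertible_mat_def inverts_mat_def by auto
qed

lemma kkt_matrix_mult_vec:
  fixes P Gu Ab :: "real mat"
  assumes P: "P \<in> carrier_mat n n" and Gu: "Gu \<in> carrier_mat nl n" and Ab: "Ab \<in> carrier_mat nv n"
    and g: "g \<in> carrier_vec nl"
    and u: "u \<in> carrier_vec n" and p: "p \<in> carrier_vec nl" and q: "q \<in> carrier_vec nv"
  shows "block3 P (transpose_mat Gu) (transpose_mat Ab)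
      (0\<^sub>m nl n) (Dg g) (0\<^sub>m nl nv) Ab (0\<^sub>m nv nl) (0\<^sub>m nv nv) *\<^sub>v (u @\<^sub>v p @\<^sub>v q)
    = (P *\<^sub>v u + transpose_mat Gu *\<^sub>v p + transpose_mat Ab *\<^sub>v q) @\<^sub>v (Dg g *\<^sub>v p) @\<^sub>v (Ab *\<^sub>v u)"
proof -
  have GuT: "transpose_mat Gu \<in> carrier_mat n nl" and AbT: "transpose_mat Ab \<in> carrier_mat n nv"
    using Gu Ab by auto
  have "Dg g *\<^sub>v p \<in> carrier_vec nl" and "Ab *\<^sub>v u \<in> carrier_vec nv"
    using Dg_carrier_mat[OF g] Ab u p by auto
  then show ?thesis
    using block3_mult_vec[OF P GuT AbT zero_carrier_mat Dg_carrier_mat[OF g] zero_carrier_mat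
        Ab zero_carrier_mat zero_carrier_mat u p q] u p q
    by (simp add: zero_mat_mult_vec)
qed

lemma kkt_matrix_invertible:
  fixes P Gu Ab :: "real mat"
  assumes P: "pos_def n P" and Gu: "Gu \<in> carrier_mat nl n" and Ab: "Ab \<in> carrier_mat nv n"
    and g: "g \<in> carrier_vec nl" and g_nonzero: "\<And>j. j < nl \<Longrightarrow> g $ j \<noteq> 0"
    and rank: "full_row_rank Ab"
  shows "invertible_mat (block3 P (transpose_mat Gu) (transpose_mat Ab)
           (0\<^sub>m nl n) (Dg g) (0\<^sub>m nl nv) Ab (0\<^sub>m nv nl) (0\<^sub>m nv nv))"
    (is "invertible_mat ?K")
proof (rule invertible_mat_if_trivial_kernel)
  have Pc: "P \<in> carrier_mat n n" using P by (simp add: pos_def_def)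
  have GuT: "transpose_mat Gu \<in> carrier_mat n nl" and AbT: "transpose_mat Ab \<in> carrier_mat n nv"
    using Gu Ab by auto
  show "?K \<in> carrier_mat (n + nl + nv) (n + nl + nv)"
    by (rule block3_carrier_mat[OF Pc Dg_carrier_mat[OF g] zero_carrier_mat])
  fix v assume "v \<in> carrier_vec (n + nl + nv)" and Kv: "?K *\<^sub>v v = 0\<^sub>v (n + nl + nv)"
  from this(1) obtain u p q where u: "u \<in> carrier_vec n" and p: "p \<in> carrier_vec nl"
    and q: "q \<in> carrier_vec nv" and v: "v = u @\<^sub>v p @\<^sub>v q"
    by (rule carrier_append3_vecE)
  have Pu: "P *\<^sub>v u \<in> carrier_vec n" and GuTp: "transpose_mat Gu *\<^sub>v p \<in> carrier_vec n"
    and AbTq: "transpose_mat Ab *\<^sub>v q \<in> carrier_vec n" and Dgp: "Dg g *\<^sub>v p \<in> carrier_vec nl"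
    using Pc GuT AbT Dg_carrier_mat[OF g] u p q by auto
  have "(P *\<^sub>v u + transpose_mat Gu *\<^sub>v p + transpose_mat Ab *\<^sub>v q)
      @\<^sub>v (Dg g *\<^sub>v p) @\<^sub>v (Ab *\<^sub>v u) = 0\<^sub>v n @\<^sub>v 0\<^sub>v nl @\<^sub>v 0\<^sub>v nv"
    using Kv unfolding v zero_append3_vec kkt_matrix_mult_vec[OF Pc Gu Ab g u p q] .
  then have stat: "P *\<^sub>v u + transpose_mat Gu *\<^sub>v p + transpose_mat Ab *\<^sub>v q = 0\<^sub>v n"
    and comp: "Dg g *\<^sub>v p = 0\<^sub>v nl" and feas: "Ab *\<^sub>v u = 0\<^sub>v nv"
    using append3_vec_eq_iff[OF add_carrier_vec[OF add_carrier_vec[OF Pu GuTp] AbTq] zero_carrier_vec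
        Dgp zero_carrier_vec] by simp_all
  have p0: "p = 0\<^sub>v nl" using Dg_nonzero_mult_vec_eq_0[OF g g_nonzero p comp] .
  have "transpose_mat Gu *\<^sub>v p = 0\<^sub>v n" using GuT unfolding p0 by auto
  then have stat': "P *\<^sub>v u + transpose_mat Ab *\<^sub>v q = 0\<^sub>v n"
    using stat Pu by simp
  have "u \<bullet> (transpose_mat Ab *\<^sub>v q) = q \<bullet> (Ab *\<^sub>v u)"
    using comm_scalar_prod[OF u AbTq] transpose_vec_mult_scalar[OF Ab u q] by simp
  then have "u \<bullet> (transpose_mat Ab *\<^sub>v q) = 0" using feas q by simp
  moreover have "u \<bullet> (P *\<^sub>v u) + u \<bullet> (transpose_mat Ab *\<^sub>v q) = 0"
    using stat' scalar_prod_add_distrib[OF u Pu AbTq] u by simp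
  ultimately have "u \<bullet> (P *\<^sub>v u) = 0" by simp
  then have u0: "u = 0\<^sub>v n" using P u unfolding pos_def_def by force
  have "P *\<^sub>v u = 0\<^sub>v n" using Pc unfolding u0 by auto
  then have "transpose_mat Ab *\<^sub>v q = 0\<^sub>v n"
    using stat' AbTq by simp
  then have "q = 0\<^sub>v nv" using full_row_rank_transpose_kernel[OF Ab rank q] by blast
  then show "v = 0\<^sub>v (n + nl + nv)" using p0 u0 unfolding v zero_append3_vec by simp
qed

section \<open>The auxiliary best-response problem\<close>

lemma best_response_data_carrier:
  assumes A: "A \<in> carrier_mat ma n" and b: "b \<in> carrier_vec ma" and G: "G \<in> carrier_mat mg n"
  shows "G_under G h x \<in> carrier_mat (dim_row (G_under G h x)) n"
    and "h_under G h x \<in> carrier_vec (dim_row (G_under G h x))"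
    and "A_bar A G h x \<in> carrier_mat (dim_row (A_bar A G h x)) n"
    and "b_bar b G h x \<in> carrier_vec (dim_row (A_bar A G h x))"
proof -
  have rows: "rows_sel G ks \<in> carrier_mat (length ks) n" for ks
    using G unfolding rows_sel_def by (intro carrier_matI) auto
  have Ab: "A_bar A G h x \<in> carrier_mat (ma + length (act_idx G h x)) n"
    unfolding A_bar_def by (rule carrier_append_rows[OF A rows])
  have bb: "b_bar b G h x \<in> carrier_vec (ma + length (act_idx G h x))"
    unfolding b_bar_def vec_sel_def using b by (intro append_carrier_vec carrier_vecI) auto
  show "G_under G h x \<in> carrier_mat (dim_row (G_under G h x)) n"
    and "h_under G h x \<in> carrier_vec (dim_row (G_under G h x))"
    using rows unfolding G_under_def h_under_def vec_sel_def by (auto simp: rows_sel_def)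
  show "A_bar A G h x \<in> carrier_mat (dim_row (A_bar A G h x)) n"
    and "b_bar b G h x \<in> carrier_vec (dim_row (A_bar A G h x))"
    using Ab bb carrier_matD(1)[OF Ab] by simp_all
qed

lemma G_under_slack_nonzero:
  assumes "j < dim_row (G_under G h x)"
  shows "(G_under G h x *\<^sub>v x - h_under G h x) $ j \<noteq> 0"
proof -
  let ?k = "inact_idx G h x ! j"
  have j: "j < length (inact_idx G h x)" using assms by (simp add: G_under_def rows_sel_def)
  then have "?k \<in> set (inact_idx G h x)" by (rule nth_mem)
  then have k: "?k < dim_row G" "(G *\<^sub>v x) $ ?k \<noteq> h $ ?k" by (auto simp: inact_idx_def)
  have "row (G_under G h x) j = row G ?k"
    using j k(1) by (auto simp: G_under_def rows_sel_def)
  then have "(G_under G h x *\<^sub>v x) $ j = (G *\<^sub>v x) $ ?k"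
    using j k(1) by (simp add: G_under_def rows_sel_def)
  moreover have "h_under G h x $ j = h $ ?k" using j by (simp add: h_under_def vec_sel_def)
  moreover have "(G_under G h x *\<^sub>v x - h_under G h x) $ j
      = (G_under G h x *\<^sub>v x) $ j - h_under G h x $ j"
    using j by (simp add: h_under_def vec_sel_def)
  ultimately show ?thesis using k(2) by simp
qed

lemma Jcost_quadratic:
  assumes Q: "Q \<in> carrier_mat n n" and S: "S i \<in> carrier_mat n n"
    and r: "r i \<in> carrier_vec n" and \<pi>: "\<pi> \<in> carrier_vec n" and y: "y \<in> carrier_vec n"
  shows "Jcost n P Q r S I i y x \<pi>
    = 1/2 * (y \<bullet> (P *\<^sub>v y)) + y \<bullet> (Q *\<^sub>v sigma n I i x + r i + S i *\<^sub>v \<pi>)"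
proof -
  have "sigma n I i x \<in> carrier_vec n" by (simp add: sigma_def)
  then have Q\<sigma>: "Q *\<^sub>v sigma n I i x \<in> carrier_vec n" using Q by simp
  have S\<pi>: "S i *\<^sub>v \<pi> \<in> carrier_vec n" using S \<pi> by simp
  have "y \<bullet> (Q *\<^sub>v sigma n I i x + r i + S i *\<^sub>v \<pi>)
      = y \<bullet> (Q *\<^sub>v sigma n I i x) + r i \<bullet> y + y \<bullet> (S i *\<^sub>v \<pi>)"
    using scalar_prod_add_distrib[OF y add_carrier_vec[OF Q\<sigma> r] S\<pi>]
      scalar_prod_add_distrib[OF y Q\<sigma> r] comm_scalar_prod[OF r y] by simp
  then show ?thesis by (simp add: Jcost_def add.assoc)
qed

lemma kkt_point_inactive_multipliers_zero:
  assumes kkt: "is_kkt_point n f Gu hu Ab bb x lam nu"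
    and Gu: "Gu \<in> carrier_mat nl n" and hu: "hu \<in> carrier_vec nl" and Ab: "Ab \<in> carrier_mat nv n"
    and slack: "\<And>j. j < nl \<Longrightarrow> (Gu *\<^sub>v x - hu) $ j \<noteq> 0"
  shows "lam = 0\<^sub>v nl"
proof -
  have dims: "dim_row Gu = nl" "dim_row Ab = nv" using Gu Ab by auto
  have x: "x \<in> carrier_vec n" and lam: "lam \<in> carrier_vec nl" and nu: "nu \<in> carrier_vec nv"
    and zero: "kkt_map n f Gu hu Ab bb (x @\<^sub>v lam @\<^sub>v nu) = 0\<^sub>v (n + nl + nv)"
    using kkt unfolding is_kkt_point_def dims by auto
  have g: "Gu *\<^sub>v x - hu \<in> carrier_vec nl" using Gu x hu by simp
  have stat: "grad n f x + transpose_mat Gu *\<^sub>v lam + transpose_mat Ab *\<^sub>v nu \<in> carrier_vec n"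
    using Gu Ab lam nu by (intro add_carrier_vec mult_mat_vec_carrier) (auto simp: grad_def)
  have comp: "Dg lam *\<^sub>v (Gu *\<^sub>v x - hu) \<in> carrier_vec nl"
    using mult_mat_vec_carrier[OF Dg_carrier_mat[OF lam] g] .
  have "(grad n f x + transpose_mat Gu *\<^sub>v lam + transpose_mat Ab *\<^sub>v nu)
      @\<^sub>v (Dg lam *\<^sub>v (Gu *\<^sub>v x - hu)) @\<^sub>v (Ab *\<^sub>v x - bb) = 0\<^sub>v n @\<^sub>v 0\<^sub>v nl @\<^sub>v 0\<^sub>v nv"
    using zero kkt_map_append[OF x, of lam Gu nu Ab] lam nu unfolding dims zero_append3_vec by simp
  then have "Dg lam *\<^sub>v (Gu *\<^sub>v x - hu) = 0\<^sub>v nl"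
    using append3_vec_eq_iff[OF stat zero_carrier_vec comp zero_carrier_vec] by simp
  moreover have "dim_vec (Gu *\<^sub>v x - hu) = dim_vec lam" using hu lam by simp
  ultimately have "Dg (Gu *\<^sub>v x - hu) *\<^sub>v lam = 0\<^sub>v nl" by (simp add: Dg_mult_vec_commute)
  then show ?thesis using Dg_nonzero_mult_vec_eq_0[OF g slack lam] by blast
qed

theorem theorem2:
  fixes I :: "'f set" and i :: 'f and n :: nat
    and A G S :: "'f \<Rightarrow> real mat" and b h r :: "'f \<Rightarrow> real vec"
    and P Q :: "real mat" and \<pi> :: "real vec" and xs :: "'f \<Rightarrow> real vec"
    and lamh nuh :: "real vec"
  defines "X \<equiv> \<lambda>j. polyhedron n (A j) (b j) (G j) (h j)"
    and "Jf \<equiv> \<lambda>j y x. Jcost n P Q r S I j y x \<pi>"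
    and "Gu \<equiv> G_under (G i) (h i) (xs i)" and "hu \<equiv> h_under (G i) (h i) (xs i)"
    and "Ab \<equiv> A_bar (A i) (G i) (h i) (xs i)" and "bb \<equiv> b_bar (b i) (G i) (h i) (xs i)"
    and "f \<equiv> \<lambda>y. Jcost n P Q r S I i y xs \<pi>"
  assumes "finite I" and "i \<in> I"
    and "\<forall>j\<in>I. A j \<in> carrier_mat (dim_row (A j)) n \<and> b j \<in> carrier_vec (dim_row (A j))
              \<and> G j \<in> carrier_mat (dim_row (G j)) n \<and> h j \<in> carrier_vec (dim_row (G j))"
    and "\<forall>j\<in>I. X j \<noteq> {} \<and> compact (vemb n ` X j) \<and> slater n (A j) (b j) (G j) (h j)"
    and "\<forall>j\<in>I. r j \<in> carrier_vec n \<and> S j \<in> carrier_mat n n \<and> diagonal_mat (S j)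
              \<and> pos_semidef n (S j)"
    and "\<pi> \<in> carrier_vec n"
    and "sym_mat P" and "pos_def n P"
    and "sym_mat Q" and "pos_semidef n Q"
    and "pos_def n (P - Q)"
    and "is_NE I X Jf xs"
    and "\<forall>x'. is_NE I X Jf x' \<longrightarrow> (\<forall>j\<in>I. x' j = xs j)"
    and "is_kkt_point n f Gu hu Ab bb (xs i) lamh nuh"
    and "full_row_rank Ab"
  shows "{j. j < dim_row Gu \<and> lamh $ j = 0 \<and> (Gu *\<^sub>v xs i - hu) $ j = 0} = {}
         \<and> jacobian_is (n + dim_row Gu + dim_row Ab) (kkt_map n f Gu hu Ab bb)
              (xs i @\<^sub>v lamh @\<^sub>v nuh)
              (block3 (hess n f (xs i)) (transpose_mat Gu) (transpose_mat Ab)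
                 (0\<^sub>m (dim_row Gu) n) (Dg (Gu *\<^sub>v xs i - hu)) (0\<^sub>m (dim_row Gu) (dim_row Ab))
                 Ab (0\<^sub>m (dim_row Ab) (dim_row Gu)) (0\<^sub>m (dim_row Ab) (dim_row Ab)))
         \<and> invertible_mat
              (block3 (hess n f (xs i)) (transpose_mat Gu) (transpose_mat Ab)
                 (0\<^sub>m (dim_row Gu) n) (Dg (Gu *\<^sub>v xs i - hu)) (0\<^sub>m (dim_row Gu) (dim_row Ab))
                 Ab (0\<^sub>m (dim_row Ab) (dim_row Gu)) (0\<^sub>m (dim_row Ab) (dim_row Ab)))"
proof -
  let ?x = "xs i" and ?nl = "dim_row Gu" and ?nv = "dim_row Ab"
  have "A i \<in> carrier_mat (dim_row (A i)) n" "b i \<in> carrier_vec (dim_row (A i))"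
    "G i \<in> carrier_mat (dim_row (G i)) n" and r: "r i \<in> carrier_vec n" and S: "S i \<in> carrier_mat n n"
    using assms(10,12) \<open>i \<in> I\<close> by auto
  note data = best_response_data_carrier[OF this(1-3), of "h i" ?x, folded Gu_def hu_def Ab_def bb_def]
  have P: "P \<in> carrier_mat n n" and Q: "Q \<in> carrier_mat n n"
    using assms(15,17) by (auto simp: pos_def_def pos_semidef_def)
  define k where "k = Q *\<^sub>v sigma n I i xs + r i + S i *\<^sub>v \<pi>"
  have k: "k \<in> carrier_vec n" using Q S r assms(13) by (simp add: k_def sigma_def)
  have f: "\<And>y. y \<in> carrier_vec n \<Longrightarrow> f y = 1/2 * (y \<bullet> (P *\<^sub>v y)) + y \<bullet> k"
    unfolding f_def k_def using Q S r assms(13) by (rule Jcost_quadratic)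
  have kkt: "?x \<in> carrier_vec n" "lamh \<in> carrier_vec ?nl" "nuh \<in> carrier_vec ?nv"
    using assms(21) unfolding is_kkt_point_def by blast+
  have slack: "\<And>j. j < ?nl \<Longrightarrow> (Gu *\<^sub>v ?x - hu) $ j \<noteq> 0"
    unfolding Gu_def hu_def by (rule G_under_slack_nonzero)
  have "lamh = 0\<^sub>v ?nl"
    using kkt_point_inactive_multipliers_zero[OF assms(21) data(1-3) slack] .
  then have Dg_lamh: "Dg lamh * Gu = 0\<^sub>m ?nl n"
    using left_mult_zero_mat[OF data(1)] by (simp add: Dg_zero_vec)
  have hess: "hess n f ?x = P" using hess_quadratic[OF f P assms(14) k kkt(1)] .
  note jacobian = jacobian_kkt_map[OF grad_quadratic[OF f P assms(14) k] P k data kkt]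
  have "Gu *\<^sub>v ?x - hu \<in> carrier_vec ?nl"
    using minus_carrier_vec[OF mult_mat_vec_carrier[OF data(1) kkt(1)] data(2)] .
  note invertible = kkt_matrix_invertible[OF assms(15) data(1,3) this slack assms(22)]
  have "{j. j < ?nl \<and> lamh $ j = 0 \<and> (Gu *\<^sub>v ?x - hu) $ j = 0} = {}" using slack by auto
  then show ?thesis unfolding hess using jacobian invertible unfolding Dg_lamh by (intro conjI)
qed

end
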